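(* A terminating $2$-structure on a discrete category is quasicycle-free.
   Context: A $2$-structure $\mathcal{S}=\langle\mathcal{F},\theta_{\mathcal{F}},\mathcal{T},\theta_{\mathcal{T}}\rangle$ on a category $\mathscr{C}$ consists of a graded set $\mathcal{F}$ of function symbols, a set $\theta_{\mathcal{F}}$ of equations between terms, a set $\mathcal{T}$ of labelled reduction rules between congruence classes of terms, and a set $\theta_{\mathcal{T}}$ of equations between reductions with equal source and target; reductions are generated from morphisms $[f]$ of $\mathscr{C}$ by function symbols, rule applications $\tau(\varphi_1,\dots,\varphi_n):[F(\bar s/\bar x)]\to[G(\bar t/\bar x)]$ and composition, and $\theta_{\mathcal{T}}$ always contains all instances of the identity, associativity, functoriality and naturality equations. $\mathbb{F}_{\mathscr{C}}(\mathcal{S})$ is the category of classes of terms over $\mathrm{Ob}(\mathscr{C})$ and reductions modulo the congruence generated by $\theta_{\mathcal{T}}$. $\mathcal{S}$ is terminating if, whenever $\mathscr{C}$ is discrete, every infinite chain $t_1\xrightarrow{\alpha_1}t_2\xrightarrow{\alpha_2}t_3\to\cdots$ in $\mathbb{F}_{\mathscr{C}}(\mathcal{S})$ contains cofinitely many identity reductions. A morphism $\varphi$ is irreducible if $\varphi=\varphi_1\cdot\varphi_2$ implies $\varphi_1=1$ or $\varphi_2=1$; $\mathrm{Red}_{\mathcal{S},\mathscr{C}}$ has vertices the objects of $\mathbb{F}_{\mathscr{C}}(\mathcal{S})$ and edges the irreducible morphisms. A quasicycle in a directed graph is a pair $(T,t)$, $T$ an infinite chain $t_0\to t_1\to\cdots$,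 $t$ a vertex with a path $t_i\to t$ for all $i$. $\mathcal{S}$ is quasicycle-free if every quasicycle in $\mathrm{Red}_{\mathcal{S},\mathscr{C}}$ contains cofinitely many identity reductions. *)

theory Defs
  imports Main
begin

record ('o,'m) cat =
  obs  :: "'o set"
  mors :: "'m set"
  dm   :: "'m \<Rightarrow> 'o"
  cd   :: "'m \<Rightarrow> 'o"
  idm  :: "'o \<Rightarrow> 'm"
  cmp  :: "'m \<Rightarrow> 'm \<Rightarrow> 'm"   (* cmp g f = g o f, defined when cd f = dm g *)

definition is_category :: "('o,'m,'z) cat_scheme \<Rightarrow> bool" where
  "is_category C \<longleftrightarrow>
     (\<forall>f\<in>mors C. dm C f \<in> obs C \<and> cd C f \<in> obs C) \<and>
     (\<forall>x\<in>obs C. idm C x \<in> mors C \<and> dm C (idm C x) = x \<and> cd C (idm C x) = x) \<and>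
     (\<forall>f\<in>mors C. \<forall>g\<in>mors C. cd C f = dm C g \<longrightarrow>
         cmp C g f \<in> mors C \<and> dm C (cmp C g f) = dm C f \<and> cd C (cmp C g f) = cd C g) \<and>
     (\<forall>f\<in>mors C. cmp C f (idm C (dm C f)) = f \<and> cmp C (idm C (cd C f)) f = f) \<and>
     (\<forall>f\<in>mors C. \<forall>g\<in>mors C. \<forall>h\<in>mors C. cd C f = dm C g \<longrightarrow> cd C g = dm C h \<longrightarrow>
         cmp C h (cmp C g f) = cmp C (cmp C h g) f)"

definition discrete :: "('o,'m,'z) cat_scheme \<Rightarrow> bool" where
  "discrete C \<longleftrightarrow> is_category C \<and> mors C = idm C ` obs C"

datatype ('f,'v) trm = V 'v | Fn 'f "('f,'v) trm list"

fun subst :: "('v \<Rightarrow> ('f,'w) trm) \<Rightarrow> ('f,'v) trm \<Rightarrow> ('f,'w) trm" where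
  "subst \<sigma> (V x) = \<sigma> x"
| "subst \<sigma> (Fn F ts) = Fn F (map (subst \<sigma>) ts)"

fun wf_trm :: "'f set \<Rightarrow> ('f \<Rightarrow> nat) \<Rightarrow> ('v \<Rightarrow> bool) \<Rightarrow> ('f,'v) trm \<Rightarrow> bool" where
  "wf_trm Fs ar P (V x) = P x"
| "wf_trm Fs ar P (Fn F ts) = (F \<in> Fs \<and> length ts = ar F \<and> list_all (wf_trm Fs ar P) ts)"

datatype ('f,'l,'m) red =
    RMor 'm
  | RFun 'f "('f,'l,'m) red list"
  | RRule 'l "('f,'l,'m) red list"
  | RComp "('f,'l,'m) red" "('f,'l,'m) red"   (* diagrammatic composite: first, then second *)

text \<open>Rule terms use variables x_0, x_1, ... (type nat); a rule with rarity n uses x_0..x_(n-1).\<close>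

record ('f,'l,'m) twostr =
  fsym   :: "'f set"
  ar     :: "'f \<Rightarrow> nat"
  eqF    :: "(('f,nat) trm \<times> ('f,nat) trm) set"
  rls    :: "'l set"
  rar    :: "'l \<Rightarrow> nat"
  rlhs   :: "'l \<Rightarrow> ('f,nat) trm"
  rrhs   :: "'l \<Rightarrow> ('f,nat) trm"
  eqT    :: "(('f,'l,'m) red \<times> ('f,'l,'m) red) set"

definition substl :: "('f,'w) trm list \<Rightarrow> ('f,nat) trm \<Rightarrow> ('f,'w) trm" where
  "substl ts t = subst (\<lambda>i. ts ! i) t"

fun rsubl :: "('f,'l,'m) red list \<Rightarrow> ('f,nat) trm \<Rightarrow> ('f,'l,'m) red" where
  "rsubl as (V i) = as ! i"
| "rsubl as (Fn F ts) = RFun F (map (rsubl as) ts)"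

definition wf_ct :: "('o,'m,'z) cat_scheme \<Rightarrow> ('f,'l,'m,'y) twostr_scheme \<Rightarrow> ('f,'o) trm \<Rightarrow> bool" where
  "wf_ct C S t = wf_trm (fsym S) (ar S) (\<lambda>x. x \<in> obs C) t"

inductive teq :: "('o,'m,'z) cat_scheme \<Rightarrow> ('f,'l,'m,'y) twostr_scheme \<Rightarrow> ('f,'o) trm \<Rightarrow> ('f,'o) trm \<Rightarrow> bool"
  for C S where
  teq_refl: "teq C S t t"
| teq_sym: "teq C S t u \<Longrightarrow> teq C S u t"
| teq_trans: "teq C S t u \<Longrightarrow> teq C S u v \<Longrightarrow> teq C S t v"
| teq_inst: "(l, r) \<in> eqF S \<Longrightarrow> (\<forall>i. wf_ct C S (\<sigma> i)) \<Longrightarrow> teq C S (subst \<sigma> l) (subst \<sigma> r)"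
| teq_ctx: "length ts = length us \<Longrightarrow> (\<forall>i<length ts. teq C S (ts ! i) (us ! i))
             \<Longrightarrow> teq C S (Fn F ts) (Fn F us)"

fun rsrc :: "('o,'m,'z) cat_scheme \<Rightarrow> ('f,'l,'m,'y) twostr_scheme \<Rightarrow> ('f,'l,'m) red \<Rightarrow> ('f,'o) trm" where
  "rsrc C S (RMor f) = V (dm C f)"
| "rsrc C S (RFun F as) = Fn F (map (rsrc C S) as)"
| "rsrc C S (RRule \<tau> as) = substl (map (rsrc C S) as) (rlhs S \<tau>)"
| "rsrc C S (RComp a b) = rsrc C S a"

fun rtgt :: "('o,'m,'z) cat_scheme \<Rightarrow> ('f,'l,'m,'y) twostr_scheme \<Rightarrow> ('f,'l,'m) red \<Rightarrow> ('f,'o) trm" where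
  "rtgt C S (RMor f) = V (cd C f)"
| "rtgt C S (RFun F as) = Fn F (map (rtgt C S) as)"
| "rtgt C S (RRule \<tau> as) = substl (map (rtgt C S) as) (rrhs S \<tau>)"
| "rtgt C S (RComp a b) = rtgt C S b"

fun wf_red :: "('o,'m,'z) cat_scheme \<Rightarrow> ('f,'l,'m,'y) twostr_scheme \<Rightarrow> ('f,'l,'m) red \<Rightarrow> bool" where
  "wf_red C S (RMor f) = (f \<in> mors C)"
| "wf_red C S (RFun F as) = (F \<in> fsym S \<and> length as = ar S F \<and> list_all (wf_red C S) as)"
| "wf_red C S (RRule \<tau> as) = (\<tau> \<in> rls S \<and> length as = rar S \<tau> \<and> list_all (wf_red C S) as)"
| "wf_red C S (RComp a b) = (wf_red C S a \<and> wf_red C S b \<and> teq C S (rtgt C S a) (rsrc C S b))"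

fun id_red :: "('o,'m,'z) cat_scheme \<Rightarrow> ('f,'o) trm \<Rightarrow> ('f,'l,'m) red" where
  "id_red C (V x) = RMor (idm C x)"
| "id_red C (Fn F ts) = RFun F (map (id_red C) ts)"

definition two_structure :: "('o,'m,'z) cat_scheme \<Rightarrow> ('f,'l,'m,'y) twostr_scheme \<Rightarrow> bool" where
  "two_structure C S \<longleftrightarrow>
     is_category C \<and>
     (\<forall>(l,r)\<in>eqF S. wf_trm (fsym S) (ar S) (\<lambda>_. True) l \<and> wf_trm (fsym S) (ar S) (\<lambda>_. True) r) \<and>
     (\<forall>\<tau>\<in>rls S. wf_trm (fsym S) (ar S) (\<lambda>i. i < rar S \<tau>) (rlhs S \<tau>) \<and>
                wf_trm (fsym S) (ar S) (\<lambda>i. i < rar S \<tau>) (rrhs S \<tau>)) \<and>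
     (\<forall>(a,b)\<in>eqT S. wf_red C S a \<and> wf_red C S b \<and>
          teq C S (rsrc C S a) (rsrc C S b) \<and> teq C S (rtgt C S a) (rtgt C S b)) \<and>
     \<comment> \<open>identity\<close>
     (\<forall>a t. wf_red C S a \<and> wf_ct C S t \<and> teq C S t (rsrc C S a) \<longrightarrow> (RComp (id_red C t) a, a) \<in> eqT S) \<and>
     (\<forall>a t. wf_red C S a \<and> wf_ct C S t \<and> teq C S (rtgt C S a) t \<longrightarrow> (RComp a (id_red C t), a) \<in> eqT S) \<and>
     \<comment> \<open>associativity\<close>
     (\<forall>a b c. wf_red C S (RComp (RComp a b) c) \<longrightarrow> (RComp (RComp a b) c, RComp a (RComp b c)) \<in> eqT S) \<and>
     \<comment> \<open>functoriality of the inclusion of C and of the function symbols\<close>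
     (\<forall>f\<in>mors C. \<forall>g\<in>mors C. cd C f = dm C g \<longrightarrow> (RMor (cmp C g f), RComp (RMor f) (RMor g)) \<in> eqT S) \<and>
     (\<forall>F as bs. F \<in> fsym S \<and> length as = ar S F \<and> length bs = ar S F \<and>
          (\<forall>i<ar S F. wf_red C S (RComp (as ! i) (bs ! i))) \<longrightarrow>
          (RFun F (map2 RComp as bs), RComp (RFun F as) (RFun F bs)) \<in> eqT S) \<and>
     \<comment> \<open>naturality of the rules\<close>
     (\<forall>\<tau> as. \<tau> \<in> rls S \<and> length as = rar S \<tau> \<and> list_all (wf_red C S) as \<longrightarrow>
          (RRule \<tau> as, RComp (RRule \<tau> (map (\<lambda>a. id_red C (rsrc C S a)) as)) (rsubl as (rrhs S \<tau>))) \<in> eqT S \<and>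
          (RRule \<tau> as, RComp (rsubl as (rlhs S \<tau>)) (RRule \<tau> (map (\<lambda>a. id_red C (rtgt C S a)) as))) \<in> eqT S)"

text \<open>Congruence on reductions generated by theta_T (morphisms of F_C(S) are its classes).\<close>
inductive req :: "('o,'m,'z) cat_scheme \<Rightarrow> ('f,'l,'m,'y) twostr_scheme \<Rightarrow> ('f,'l,'m) red \<Rightarrow> ('f,'l,'m) red \<Rightarrow> bool"
  for C S where
  req_gen: "(a, b) \<in> eqT S \<Longrightarrow> req C S a b"
| req_refl: "wf_red C S a \<Longrightarrow> req C S a a"
| req_sym: "req C S a b \<Longrightarrow> req C S b a"
| req_trans: "req C S a b \<Longrightarrow> req C S b c \<Longrightarrow> req C S a c"
| req_fun: "length as = length bs \<Longrightarrow> (\<forall>i<length as. req C S (as ! i) (bs ! i))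
             \<Longrightarrow> req C S (RFun F as) (RFun F bs)"
| req_rule: "length as = length bs \<Longrightarrow> (\<forall>i<length as. req C S (as ! i) (bs ! i))
             \<Longrightarrow> req C S (RRule \<tau> as) (RRule \<tau> bs)"
| req_comp: "req C S a a' \<Longrightarrow> req C S b b' \<Longrightarrow> req C S (RComp a b) (RComp a' b')"

definition is_identity :: "('o,'m,'z) cat_scheme \<Rightarrow> ('f,'l,'m,'y) twostr_scheme \<Rightarrow> ('f,'l,'m) red \<Rightarrow> bool" where
  "is_identity C S a \<longleftrightarrow> (\<exists>t. wf_ct C S t \<and> req C S a (id_red C t))"

definition is_chain :: "('o,'m,'z) cat_scheme \<Rightarrow> ('f,'l,'m,'y) twostr_scheme \<Rightarrow> (nat \<Rightarrow> ('f,'o) trm) \<Rightarrow> (nat \<Rightarrow> ('f,'l,'m) red) \<Rightarrow> bool" where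
  "is_chain C S t a \<longleftrightarrow> (\<forall>i. wf_ct C S (t i) \<and> wf_red C S (a i) \<and>
      teq C S (rsrc C S (a i)) (t i) \<and> teq C S (rtgt C S (a i)) (t (Suc i)))"

definition cofinitely_identities :: "('o,'m,'z) cat_scheme \<Rightarrow> ('f,'l,'m,'y) twostr_scheme \<Rightarrow> (nat \<Rightarrow> ('f,'l,'m) red) \<Rightarrow> bool" where
  "cofinitely_identities C S a \<longleftrightarrow> finite {i. \<not> is_identity C S (a i)}"

definition terminating :: "('o,'m,'z) cat_scheme \<Rightarrow> ('f,'l,'m,'y) twostr_scheme \<Rightarrow> bool" where
  "terminating C S \<longleftrightarrow> (discrete C \<longrightarrow>
      (\<forall>t a. is_chain C S t a \<longrightarrow> cofinitely_identities C S a))"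

definition irreducible :: "('o,'m,'z) cat_scheme \<Rightarrow> ('f,'l,'m,'y) twostr_scheme \<Rightarrow> ('f,'l,'m) red \<Rightarrow> bool" where
  "irreducible C S a \<longleftrightarrow> wf_red C S a \<and>
     (\<forall>a1 a2. wf_red C S (RComp a1 a2) \<and> req C S a (RComp a1 a2) \<longrightarrow>
        is_identity C S a1 \<or> is_identity C S a2)"

inductive red_path :: "('o,'m,'z) cat_scheme \<Rightarrow> ('f,'l,'m,'y) twostr_scheme \<Rightarrow> ('f,'o) trm \<Rightarrow> ('f,'o) trm \<Rightarrow> bool"
  for C S where
  rp_nil: "wf_ct C S u \<Longrightarrow> teq C S u v \<Longrightarrow> red_path C S u v"
| rp_cons: "irreducible C S e \<Longrightarrow> teq C S u (rsrc C S e) \<Longrightarrow> red_path C S (rtgt C S e) v \<Longrightarrow> red_path C S u v"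

definition is_quasicycle :: "('o,'m,'z) cat_scheme \<Rightarrow> ('f,'l,'m,'y) twostr_scheme \<Rightarrow> (nat \<Rightarrow> ('f,'o) trm) \<Rightarrow> (nat \<Rightarrow> ('f,'l,'m) red) \<Rightarrow> ('f,'o) trm \<Rightarrow> bool" where
  "is_quasicycle C S t a u \<longleftrightarrow> is_chain C S t a \<and> (\<forall>i. irreducible C S (a i)) \<and>
      wf_ct C S u \<and> (\<forall>i. red_path C S (t i) u)"

definition quasicycle_free :: "('o,'m,'z) cat_scheme \<Rightarrow> ('f,'l,'m,'y) twostr_scheme \<Rightarrow> bool" where
  "quasicycle_free C S \<longleftrightarrow>
     (\<forall>t a u. is_quasicycle C S t a u \<longrightarrow> cofinitely_identities C S a)"

end

theory Submission
  imports Defs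
begin

lemma quasicycle_is_chain:
  assumes "is_quasicycle C S t a u"
  shows "is_chain C S t a"
  using assms by (simp add: is_quasicycle_def)

lemma terminating_chain_cofinitely_identities:
  assumes "terminating C S" and "discrete C" and "is_chain C S t a"
  shows "cofinitely_identities C S a"
  using assms by (simp add: terminating_def)

text \<open>The edges of a quasicycle are morphisms of the free category, so its chain is one of the
  chains that termination controls.\<close>

theorem lemma3p17:
  fixes C :: "('o,'m) cat" and S :: "('f,'l,'m) twostr"
  assumes "two_structure C S" and "discrete C" and "terminating C S"
  shows "quasicycle_free C S"
  unfolding quasicycle_free_def
proof (intro allI impI)
  fix t a u
  assume "is_quasicycle C S t a u"
  then have "is_chain C S t a"
    by (rule quasicycle_is_chain)
  with assms(2,3) show "cofinitely_identities C S a"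
    using terminating_chain_cofinitely_identities by blast
qed

end
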